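(* Let $N$ be a nonnegative integer and let $a,b,d,f\in\mathbb{C}$ be such that every hypergeometric series below is well defined (no lower parameter is a nonpositive integer) and the denominator $f(a-f)-db$ is nonzero. Put $$g=\frac{f(b+d-a)(f-a)}{f(a-f)-db}.$$ Then $$ {}_{7}F_{6}\left[\begin{matrix} a,\ 1+\frac{a}{2},\ b,\ a-f+1,\ d,\ f+1,\ -N\\ \frac{a}{2},\ 1+a-b,\ f,\ 1+a-d,\ a-f,\ 1+a+N\end{matrix};1\right]=\frac{(1+a)_N\,(a-b-d)_N}{(1+a-b)_N\,(1+a-d)_N}\cdot\frac{(g+1)_N}{(g)_N}.$$
   Context: $(x)_n$ denotes the Pochhammer symbol: $(x)_0=1$, $(x)_n=x(x+1)\cdots(x+n-1)$ for $n\ge1$. The generalized hypergeometric function is $${}_{r+1}F_{r}\left[\begin{matrix} a_1,\dots,a_{r+1}\\ b_1,\dots,b_r\end{matrix};z\right]=\sum_{n=0}^{\infty}\frac{(a_1)_n\cdots(a_{r+1})_n}{(b_1)_n\cdots(b_r)_n\,n!}z^n ,$$ where no $b_i$ is a nonpositive integer; when one upper parameter equals $-N$ with $N$ a nonnegative integer the series terminates. *)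

theory Defs
  imports Complex_Main "HOL-Library.Nonpos_Ints"
begin

definition hypergeom :: "complex list \<Rightarrow> complex list \<Rightarrow> complex \<Rightarrow> complex" where
  "hypergeom as bs z =
     (\<Sum>n. prod_list (map (\<lambda>a. pochhammer a n) as) / prod_list (map (\<lambda>b. pochhammer b n) bs)
            * z ^ n / fact n)"

end

theory Submission
  imports Defs
begin

text \<open>
  Since \<open>(a-f+n)(f+n) = (a-f)f + n(a+n)\<close>, the \<open>n\<close>-th term of the \<open>\<^sub>7F\<^sub>6\<close> is the \<open>n\<close>-th term
  of Dougall's terminating very-well-poised \<open>\<^sub>5F\<^sub>4\<close> with parameters \<open>a, b, d, -N\<close>, plus
  \<open>n(a+n)/((a-f)f)\<close> times it. After an index shift, the weighted series is again a Dougall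
  series, with parameters \<open>a+2, b+1, d+1, -(N-1)\<close>. Summing both by Dougall's formula leaves
  \<open>(1+a-b-d)\<^sub>N - N b d (1+a-b-d)\<^sub>N\<^sub>-\<^sub>1/(f(a-f))\<close>, and \<open>g\<close> is chosen so that
  \<open>(a-b-d)/g = 1 - bd/(f(a-f))\<close>, which turns this into \<open>(a-b-d)\<^sub>N (g+N)/g\<close>.

  Dougall's formula is proved by checking that both sides satisfy the same first-order
  recurrence in \<open>N\<close>, the left one via a telescoping certificate; this needs nonvanishing of
  Pochhammer symbols beyond those in the hypotheses, so it is first shown for generic \<open>a\<close>
  and then extended by continuity in \<open>a\<close>.
\<close>

lemma pochhammer_shift: "x * pochhammer (x + 1) n = (x + of_nat n) * pochhammer (x::'a::comm_semiring_1) n"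
  by (metis pochhammer_rec pochhammer_rec')

lemma pochhammer_plus_1:
  fixes x :: "'a::field"
  assumes "x \<noteq> 0"
  shows "pochhammer (x + 1) n = (x + of_nat n) / x * pochhammer x n"
  using pochhammer_shift[of x n] assms by (simp add: field_simps)

lemma pochhammer_neg_shift:
  "m * pochhammer (1 - m) n = (m - of_nat n) * pochhammer (- m :: 'a::comm_ring_1) n"
proof -
  have "(- m) * pochhammer (- m + 1) n = (- m + of_nat n) * pochhammer (- m) n"
    by (rule pochhammer_shift)
  then show ?thesis by (simp add: algebra_simps)
qed

lemma pochhammer_neq_0_if_notin_nonpos_Ints:
  fixes x :: "'a::field_char_0"
  shows "x \<notin> \<int>\<^sub>\<le>\<^sub>0 \<Longrightarrow> pochhammer x n \<noteq> 0"
  by (auto simp: pochhammer_eq_0_iff)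

definition well_poised_term :: "'a::field_char_0 \<Rightarrow> 'a \<Rightarrow> 'a \<Rightarrow> nat \<Rightarrow> nat \<Rightarrow> 'a" where
  "well_poised_term a b d N n =
     pochhammer a n * pochhammer b n * pochhammer d n * pochhammer (- of_nat N) n /
     (pochhammer (1+a-b) n * pochhammer (1+a-d) n * pochhammer (1+a+of_nat N) n * fact n)"

text \<open>The factor \<open>(a + 2n)/a\<close> is \<open>(1 + a/2)\<^sub>n / (a/2)\<^sub>n\<close>.\<close>

definition dougall_term :: "'a::field_char_0 \<Rightarrow> 'a \<Rightarrow> 'a \<Rightarrow> nat \<Rightarrow> nat \<Rightarrow> 'a" where
  "dougall_term a b d N n = well_poised_term a b d N n * (a + 2 * of_nat n) / a"

definition dougall_certificate :: "'a::field_char_0 \<Rightarrow> 'a \<Rightarrow> 'a \<Rightarrow> nat \<Rightarrow> nat \<Rightarrow> 'a" where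
  "dougall_certificate a b d N n =
     - well_poised_term a b d (Suc N) n * of_nat n * (of_nat n + a - b) * (of_nat n + a - d)
       * (1 + a + of_nat N + of_nat n) / (a * (of_nat N + 1))"

lemma well_poised_term_Suc:
  "well_poised_term a b d N (Suc n) = well_poised_term a b d N n
     * ((a + of_nat n) * (b + of_nat n) * (d + of_nat n) * (- of_nat N + of_nat n))
     / ((1+a-b + of_nat n) * (1+a-d + of_nat n) * (1 + a + of_nat N + of_nat n) * (of_nat n + 1))"
  unfolding well_poised_term_def pochhammer_Suc fact_Suc of_nat_Suc
  by (simp only: divide_inverse inverse_mult_distrib mult_ac add_ac)

lemma well_poised_term_eq_0: "N < n \<Longrightarrow> well_poised_term a b d N n = 0"
  unfolding well_poised_term_def by (simp add: pochhammer_of_nat_eq_0_lemma)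

lemma dougall_term_eq_0: "N < n \<Longrightarrow> dougall_term a b d N n = 0"
  unfolding dougall_term_def by (simp add: well_poised_term_eq_0)

lemma well_poised_term_from_Suc_N:
  fixes a b d :: "'a::field_char_0"
  assumes "pochhammer (1+a+of_nat N) (Suc n) \<noteq> 0"
  shows "well_poised_term a b d N n = well_poised_term a b d (Suc N) n
     * ((of_nat N + 1 - of_nat n) * (1 + a + of_nat N + of_nat n)) / ((of_nat N + 1) * (1 + a + of_nat N))"
proof -
  let ?k = "1 + a + of_nat N"
  have k: "?k \<noteq> 0" "?k + of_nat n \<noteq> 0" "pochhammer ?k n \<noteq> 0"
    using assms pochhammer_rec[of ?k n] pochhammer_rec'[of ?k n] by auto
  have N1: "(of_nat N + 1 :: 'a) \<noteq> 0"
    using of_nat_neq_0[of N] by (simp add: add.commute)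
  have "pochhammer (- of_nat N) n * (of_nat N + 1) = pochhammer (- (of_nat N + 1)) n * (of_nat N + 1 - of_nat n :: 'a)"
    using pochhammer_neg_shift[of "of_nat N + 1 :: 'a" n] by (simp add: mult.commute)
  then have minus_N: "pochhammer (- of_nat N) n = pochhammer (- (of_nat N + 1)) n * (of_nat N + 1 - of_nat n) / (of_nat N + 1 :: 'a)"
    using N1 by (simp add: eq_divide_eq)
  have k_shift: "?k * pochhammer (?k + 1) n = (?k + of_nat n) * pochhammer ?k n"
    by (rule pochhammer_shift)
  then have inv_k: "inverse (pochhammer ?k n) = (?k + of_nat n) * inverse (?k * pochhammer (?k + 1) n)"
    using k by (simp add: inverse_mult_distrib)
  have Suc_N: "well_poised_term a b d (Suc N) n =
     pochhammer a n * pochhammer b n * pochhammer d n * pochhammer (- (of_nat N + 1)) n /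
     (pochhammer (1+a-b) n * pochhammer (1+a-d) n * pochhammer (?k + 1) n * fact n)"
    by (simp add: well_poised_term_def add_ac)
  show ?thesis
    unfolding Suc_N unfolding well_poised_term_def
    by (simp only: divide_inverse inverse_mult_distrib minus_N inv_k mult_ac)
qed

lemma dougall_certificate_identity:
  fixes V a b d x y :: "'a::field_char_0"
  assumes "a \<noteq> 0" "y + 1 \<noteq> 0" "1 + a + y \<noteq> 0"
  shows "(1+a-b+y)*(1+a-d+y) * (V*(a+2*x)/a)
      - (1+a+y)*(1+a-b-d+y) * (V*((y+1-x)*(1+a+y+x))/((y+1)*(1+a+y))*(a+2*x)/a)
    = - V*((a+x)*(b+x)*(d+x)*(x-y-1))/(a*(y+1)) - (- V*x*(x+a-b)*(x+a-d)*(1+a+y+x)/(a*(y+1)))"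
proof -
  have "(1+a-b+y)*(1+a-d+y) * (V*(a+2*x)/a)
      - (1+a+y)*(1+a-b-d+y) * (V*((y+1-x)*(1+a+y+x))/((y+1)*(1+a+y))*(a+2*x)/a)
    = V/(a*(y+1)) * ((1+a-b+y)*(1+a-d+y) * (a+2*x) * (y+1) - (1+a-b-d+y) * ((y+1-x)*(1+a+y+x)) * (a+2*x))"
    using assms by (simp add: divide_simps) algebra
  also have "\<dots> = V/(a*(y+1)) * (- ((a+x)*(b+x)*(d+x)*(x-y-1)) + x*(x+a-b)*(x+a-d)*(1+a+y+x))"
    by algebra
  also have "\<dots> = - V*((a+x)*(b+x)*(d+x)*(x-y-1))/(a*(y+1)) - (- V*x*(x+a-b)*(x+a-d)*(1+a+y+x)/(a*(y+1)))"
    using assms by (simp add: divide_simps) algebra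
  finally show ?thesis .
qed

lemma dougall_certificate_Suc:
  fixes a b d :: "'a::field_char_0"
  assumes "1+a-b+of_nat n \<noteq> 0" "1+a-d+of_nat n \<noteq> 0" "1 + a + of_nat (Suc N) + of_nat n \<noteq> 0"
  shows "dougall_certificate a b d N (Suc n) = - well_poised_term a b d (Suc N) n
    * ((a + of_nat n) * (b + of_nat n) * (d + of_nat n) * (of_nat n - of_nat N - 1)) / (a * (of_nat N + 1))"
proof -
  define V where "V = well_poised_term a b d (Suc N) n"
  define X where "X = (a + of_nat n) * (b + of_nat n) * (d + of_nat n) * (- of_nat (Suc N) + of_nat n)"
  define Y where "Y = (1+a-b + of_nat n) * (1+a-d + of_nat n) * (1 + a + of_nat (Suc N) + of_nat n) * (of_nat n + 1)"
  have "(of_nat n + 1 :: 'a) \<noteq> 0"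
    using of_nat_neq_0 by (simp add: add.commute)
  then have "Y \<noteq> 0"
    unfolding Y_def using assms by auto
  have Y: "of_nat (Suc n) * (of_nat (Suc n) + a - b) * (of_nat (Suc n) + a - d) * (1 + a + of_nat N + of_nat (Suc n)) = Y"
    unfolding Y_def by (simp add: algebra_simps)
  have "dougall_certificate a b d N (Suc n) = - well_poised_term a b d (Suc N) (Suc n)
      * (of_nat (Suc n) * (of_nat (Suc n) + a - b) * (of_nat (Suc n) + a - d) * (1 + a + of_nat N + of_nat (Suc n)))
      / (a * (of_nat N + 1))"
    unfolding dougall_certificate_def by (simp only: mult.assoc)
  also have "\<dots> = - (V * X / Y) * Y / (a * (of_nat N + 1))"
    unfolding Y V_def X_def Y_def well_poised_term_Suc ..
  also have "\<dots> = - V * X / (a * (of_nat N + 1))"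
    using \<open>Y \<noteq> 0\<close> by simp
  also have "X = (a + of_nat n) * (b + of_nat n) * (d + of_nat n) * (of_nat n - of_nat N - 1)"
    unfolding X_def by (simp add: algebra_simps)
  finally show ?thesis
    unfolding V_def .
qed

lemma dougall_term_recurrence_certificate:
  fixes a b d :: "'a::field_char_0"
  assumes a: "a \<noteq> 0" and b: "1+a-b+of_nat n \<noteq> 0" and d: "1+a-d+of_nat n \<noteq> 0"
    and k: "pochhammer (1+a+of_nat N) (Suc (Suc n)) \<noteq> 0"
  shows "(1+a-b+of_nat N)*(1+a-d+of_nat N) * dougall_term a b d (Suc N) n
           - (1+a+of_nat N)*(1+a-b-d+of_nat N) * dougall_term a b d N n
         = dougall_certificate a b d N (Suc n) - dougall_certificate a b d N n"
proof -
  define V where "V = well_poised_term a b d (Suc N) n"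
  have k_Suc: "pochhammer (1+a+of_nat N) (Suc n) \<noteq> 0"
    using pochhammer_neq_0_mono[OF k, of "Suc n"] by simp
  have "pochhammer (1+a+of_nat N) (Suc (Suc n)) = pochhammer (1+a+of_nat N) (Suc n) * (1 + a + of_nat (Suc N) + of_nat n)"
    by (simp add: pochhammer_Suc algebra_simps)
  then have kn: "1 + a + of_nat (Suc N) + of_nat n \<noteq> 0"
    using k by auto
  have nz: "(of_nat N + 1 :: 'a) \<noteq> 0" "1 + a + of_nat N \<noteq> 0"
    using of_nat_neq_0 k_Suc pochhammer_rec[of "1+a+of_nat N" n] by (auto simp: add.commute)
  have "dougall_term a b d N n = V * ((of_nat N + 1 - of_nat n) * (1 + a + of_nat N + of_nat n))
            / ((of_nat N + 1) * (1 + a + of_nat N)) * (a + 2 * of_nat n) / a"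
    unfolding dougall_term_def V_def using well_poised_term_from_Suc_N[OF k_Suc] by simp
  then show ?thesis
    unfolding dougall_certificate_Suc[OF b d kn]
    using dougall_certificate_identity[of a "of_nat N" b d V "of_nat n", OF a nz]
    by (simp add: dougall_certificate_def dougall_term_def V_def add_ac)
qed

lemma dougall_sum_recurrence:
  fixes a b d :: "'a::field_char_0"
  assumes a: "a \<noteq> 0" and b: "pochhammer (1+a-b) (N+2) \<noteq> 0" and d: "pochhammer (1+a-d) (N+2) \<noteq> 0"
    and k: "pochhammer (1+a+of_nat N) (N+3) \<noteq> 0"
  shows "(1+a-b+of_nat N)*(1+a-d+of_nat N) * (\<Sum>n<Suc (Suc N). dougall_term a b d (Suc N) n)
       = (1+a+of_nat N)*(1+a-b-d+of_nat N) * (\<Sum>n<Suc N. dougall_term a b d N n)"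
proof -
  let ?C = "dougall_certificate a b d N"
  have "(1+a-b+of_nat N)*(1+a-d+of_nat N) * dougall_term a b d (Suc N) n
      - (1+a+of_nat N)*(1+a-b-d+of_nat N) * dougall_term a b d N n = ?C (Suc n) - ?C n"
    if n: "n < Suc (Suc N)" for n
  proof (rule dougall_term_recurrence_certificate[OF a])
    show "1 + a - b + of_nat n \<noteq> 0" "1 + a - d + of_nat n \<noteq> 0"
      using b d n by (auto simp: pochhammer_eq_0_iff eq_neg_iff_add_eq_0)
    show "pochhammer (1 + a + of_nat N) (Suc (Suc n)) \<noteq> 0"
      using pochhammer_neq_0_mono[OF k, of "Suc (Suc n)"] n by simp
  qed
  then have "(\<Sum>n<Suc (Suc N). (1+a-b+of_nat N)*(1+a-d+of_nat N) * dougall_term a b d (Suc N) n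
      - (1+a+of_nat N)*(1+a-b-d+of_nat N) * dougall_term a b d N n) = (\<Sum>n<Suc (Suc N). ?C (Suc n) - ?C n)"
    by (intro sum.cong) auto
  also have "\<dots> = ?C (Suc (Suc N)) - ?C 0"
    by (rule sum_lessThan_telescope)
  also have "\<dots> = 0"
    by (simp add: dougall_certificate_def well_poised_term_eq_0)
  finally have "(1+a-b+of_nat N)*(1+a-d+of_nat N) * (\<Sum>n<Suc (Suc N). dougall_term a b d (Suc N) n)
     - (1+a+of_nat N)*(1+a-b-d+of_nat N) * (\<Sum>n<Suc (Suc N). dougall_term a b d N n) = 0"
    by (simp only: sum_subtractf sum_distrib_left)
  moreover have "(\<Sum>n<Suc (Suc N). dougall_term a b d N n) = (\<Sum>n<Suc N. dougall_term a b d N n)"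
    using dougall_term_eq_0[of N "Suc N" a b d] by simp
  ultimately show ?thesis
    by simp
qed

lemma dougall_sum_generic:
  fixes a b d :: "'a::field_char_0"
  assumes a: "a \<noteq> 0"
  shows "pochhammer (1+a-b) (N+1) \<noteq> 0 \<Longrightarrow> pochhammer (1+a-d) (N+1) \<noteq> 0 \<Longrightarrow> pochhammer (1+a) (2*N+1) \<noteq> 0 \<Longrightarrow>
    (\<Sum>n<Suc N. dougall_term a b d N n) * (pochhammer (1+a-b) N * pochhammer (1+a-d) N)
       = pochhammer (1+a) N * pochhammer (1+a-b-d) N"
proof (induction N)
  case 0
  then show ?case using a by (simp add: dougall_term_def well_poised_term_def)
next
  case (Suc N)
  have IH: "(\<Sum>n<Suc N. dougall_term a b d N n) * (pochhammer (1+a-b) N * pochhammer (1+a-d) N)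
       = pochhammer (1+a) N * pochhammer (1+a-b-d) N"
    using Suc.prems pochhammer_neq_0_mono by (intro Suc.IH) fastforce+
  have "pochhammer (1+a) (2 * Suc N + 1) = pochhammer (1+a) N * pochhammer (1+a+of_nat N) (N+3)"
    using pochhammer_product'[of "1+a" N "N+3"] by (simp add: add.assoc numeral_3_eq_3 mult_2)
  then have "pochhammer (1+a+of_nat N) (N+3) \<noteq> 0"
    using Suc.prems(3) by auto
  then have rec: "(1+a-b+of_nat N)*(1+a-d+of_nat N) * (\<Sum>n<Suc (Suc N). dougall_term a b d (Suc N) n)
       = (1+a+of_nat N)*(1+a-b-d+of_nat N) * (\<Sum>n<Suc N. dougall_term a b d N n)"
    using Suc.prems by (intro dougall_sum_recurrence a) simp_all
  have "(\<Sum>n<Suc (Suc N). dougall_term a b d (Suc N) n) * (pochhammer (1+a-b) (Suc N) * pochhammer (1+a-d) (Suc N))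
      = ((1+a-b+of_nat N)*(1+a-d+of_nat N) * (\<Sum>n<Suc (Suc N). dougall_term a b d (Suc N) n))
        * (pochhammer (1+a-b) N * pochhammer (1+a-d) N)"
    by (simp add: pochhammer_Suc algebra_simps)
  also have "\<dots> = (1+a+of_nat N)*(1+a-b-d+of_nat N)
      * ((\<Sum>n<Suc N. dougall_term a b d N n) * (pochhammer (1+a-b) N * pochhammer (1+a-d) N))"
    unfolding rec by (simp only: mult_ac)
  also have "\<dots> = pochhammer (1+a) (Suc N) * pochhammer (1+a-b-d) (Suc N)"
    unfolding IH by (simp add: pochhammer_Suc algebra_simps)
  finally show ?case .
qed

lemma isCont_pochhammer_compose [continuous_intros]:
  fixes f :: "'a::t2_space \<Rightarrow> 'b::real_normed_field"
  shows "isCont f a \<Longrightarrow> isCont (\<lambda>x. pochhammer (f x) n) a"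
  by (rule isCont_o2[OF _ isCont_pochhammer])

lemma eventually_pochhammer_neq_0:
  fixes a c :: "'a::real_normed_field"
  shows "eventually (\<lambda>x. pochhammer (x + c) n \<noteq> 0) (at a)"
proof -
  have "eventually (\<lambda>x. \<forall>k\<in>{..<n}. x \<noteq> - of_nat k - c) (at a)"
    by (intro eventually_ball_finite ballI eventually_neq_at_within) auto
  then show ?thesis
    by (rule eventually_mono) (auto simp: pochhammer_eq_0_iff eq_diff_eq)
qed

lemma dougall_sum:
  fixes a b d :: "'a::real_normed_field"
  assumes a: "a \<noteq> 0" and b: "pochhammer (1+a-b) N \<noteq> 0" and d: "pochhammer (1+a-d) N \<noteq> 0"
    and k: "pochhammer (1+a+of_nat N) N \<noteq> 0"
  shows "(\<Sum>n<Suc N. dougall_term a b d N n)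
    = pochhammer (1+a) N * pochhammer (1+a-b-d) N / (pochhammer (1+a-b) N * pochhammer (1+a-d) N)"
proof -
  define \<phi> where "\<phi> x = (\<Sum>n<Suc N. dougall_term x b d N n) * (pochhammer (1+x-b) N * pochhammer (1+x-d) N)
       - pochhammer (1+x) N * pochhammer (1+x-b-d) N" for x
  have "isCont \<phi> a"
    unfolding \<phi>_def dougall_term_def well_poised_term_def
  proof (intro continuous_intros)
    fix n assume "n \<in> {..<Suc N}"
    then have "n \<le> N" by simp
    then show "pochhammer (1+a-b) n * pochhammer (1+a-d) n * pochhammer (1+a+of_nat N) n * fact n \<noteq> 0"
      using pochhammer_neq_0_mono[OF b] pochhammer_neq_0_mono[OF d] pochhammer_neq_0_mono[OF k] by simp
  qed (use a in auto)
  then have "(\<phi> \<longlongrightarrow> \<phi> a) (at a)"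
    by (simp add: isCont_def)
  moreover have "eventually (\<lambda>x. \<phi> x = 0) (at a)"
  proof -
    have "eventually (\<lambda>x. x \<noteq> 0 \<and> pochhammer (x + (1-b)) (N+1) \<noteq> 0 \<and> pochhammer (x + (1-d)) (N+1) \<noteq> 0
        \<and> pochhammer (x + 1) (2*N+1) \<noteq> 0) (at a)"
      by (intro eventually_conj eventually_neq_at_within eventually_pochhammer_neq_0)
    then show ?thesis
    proof (rule eventually_mono)
      fix x :: 'a
      assume "x \<noteq> 0 \<and> pochhammer (x + (1-b)) (N+1) \<noteq> 0 \<and> pochhammer (x + (1-d)) (N+1) \<noteq> 0
          \<and> pochhammer (x + 1) (2*N+1) \<noteq> 0"
      then have h: "x \<noteq> 0" "pochhammer (1+x-b) (N+1) \<noteq> 0" "pochhammer (1+x-d) (N+1) \<noteq> 0"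
          "pochhammer (1+x) (2*N+1) \<noteq> 0"
        by (simp_all add: algebra_simps)
      show "\<phi> x = 0"
        unfolding \<phi>_def using dougall_sum_generic[OF h] by simp
    qed
  qed
  then have "(\<phi> \<longlongrightarrow> 0) (at a)"
    by (rule tendsto_eventually)
  ultimately have "\<phi> a = 0"
    by (rule LIM_unique)
  then show ?thesis
    using b d by (simp add: \<phi>_def field_simps)
qed

lemma dougall_term_shift:
  fixes a b d :: "'a::field_char_0"
  assumes a: "a \<noteq> 0" "a + 2 \<noteq> 0"
    and b: "pochhammer (1+a-b) (Suc m) \<noteq> 0" and d: "pochhammer (1+a-d) (Suc m) \<noteq> 0"
    and k: "pochhammer (1+a+of_nat (Suc M)) (Suc m) \<noteq> 0"
  shows "of_nat (Suc m) * (a + of_nat (Suc m)) * dougall_term a b d (Suc M) (Suc m)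
      = (a+1)*(a+2)*b*d*(- of_nat (Suc M)) / ((1+a-b)*(1+a-d)*(2+a+of_nat M))
        * dougall_term (a+2) (b+1) (d+1) M m"
proof -
  have rb: "pochhammer (1+a-b) (Suc m) = (1+a-b) * pochhammer (1+(a+2)-(b+1)) m"
    using pochhammer_rec[of "1+a-b" m] by (simp add: algebra_simps)
  have rd: "pochhammer (1+a-d) (Suc m) = (1+a-d) * pochhammer (1+(a+2)-(d+1)) m"
    using pochhammer_rec[of "1+a-d" m] by (simp add: algebra_simps)
  have rk: "pochhammer (1+a+of_nat (Suc M)) (Suc m) = (2+a+of_nat M) * pochhammer (1+(a+2)+of_nat M) m"
    using pochhammer_rec[of "1+a+of_nat (Suc M)" m] by (simp add: algebra_simps)
  have rN: "pochhammer (- of_nat (Suc M) :: 'a) (Suc m) = (- of_nat (Suc M)) * pochhammer (- of_nat M) m"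
    using pochhammer_rec[of "- of_nat (Suc M) :: 'a" m] by (simp add: add.commute)
  have ra: "(a+1) * pochhammer (a+2) m = (a + 1 + of_nat m) * pochhammer (a+1) m"
    using pochhammer_shift[of "a+1" m] by (simp add: add.assoc)
  have nz: "1+a-b \<noteq> 0" "pochhammer (1+(a+2)-(b+1)) m \<noteq> 0" "1+a-d \<noteq> 0" "pochhammer (1+(a+2)-(d+1)) m \<noteq> 0"
    "2+a+of_nat M \<noteq> 0" "pochhammer (1+(a+2)+of_nat M) m \<noteq> 0"
    using b d k unfolding rb rd rk by auto
  have "(fact m :: 'a) \<noteq> 0" "(of_nat (Suc m) :: 'a) \<noteq> 0"
    by (simp, metis of_nat_eq_0_iff nat.distinct(1))
  with nz a ra show ?thesis
    unfolding dougall_term_def well_poised_term_def rb rd rk rN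
      pochhammer_rec[of a m] pochhammer_rec[of b m] pochhammer_rec[of d m] fact_Suc of_nat_mult
    \<comment> \<open>after clearing denominators the identity is the last disjunct\<close>
    by (simp add: divide_simps) (intro disjI2, (thin_tac "_ \<noteq> _")+, algebra)
qed

text \<open>For \<open>N = 0\<close> the truncated \<open>N - 1\<close> is harmless because of the factor \<open>N\<close>.\<close>

lemma dougall_weighted_sum:
  fixes a b d :: "'a::real_normed_field"
  assumes a: "a \<noteq> 0" "a + 2 \<noteq> 0" and b: "pochhammer (1+a-b) N \<noteq> 0" and d: "pochhammer (1+a-d) N \<noteq> 0"
    and k: "pochhammer (1+a+of_nat N) N \<noteq> 0"
  shows "(\<Sum>n<Suc N. of_nat n * (a + of_nat n) * dougall_term a b d N n)
    = - of_nat N * b * d * pochhammer (1+a) N * pochhammer (1+a-b-d) (N - 1)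
      / (pochhammer (1+a-b) N * pochhammer (1+a-d) N)"
proof (cases N)
  case 0
  then show ?thesis by simp
next
  case (Suc M)
  define c where "c = (a+1)*(a+2)*b*d*(- of_nat (Suc M)) / ((1+a-b)*(1+a-d)*(2+a+of_nat M))"
  define A2 A3 B D K P where "A2 = pochhammer (a+2) M" and "A3 = pochhammer (a+3) M"
    and "B = pochhammer (2+a-b) M" and "D = pochhammer (2+a-d) M"
    and "K = pochhammer (3+a+of_nat M) M" and "P = pochhammer (1+a-b-d) M"
  have rb: "pochhammer (1+a-b) (Suc M) = (1+a-b) * B"
    unfolding B_def using pochhammer_rec[of "1+a-b" M] by (simp add: algebra_simps)
  have rd: "pochhammer (1+a-d) (Suc M) = (1+a-d) * D"
    unfolding D_def using pochhammer_rec[of "1+a-d" M] by (simp add: algebra_simps)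
  have rk: "pochhammer (1+a+of_nat (Suc M)) (Suc M) = (2+a+of_nat M) * K"
    unfolding K_def using pochhammer_rec[of "1+a+of_nat (Suc M)" M] by (simp add: algebra_simps)
  have ra: "pochhammer (1+a) (Suc M) = (1+a) * A2" "(a+2) * A3 = (a+2+of_nat M) * A2"
    unfolding A2_def A3_def using pochhammer_rec[of "1+a" M] pochhammer_shift[of "a+2" M]
    by (simp_all add: algebra_simps)
  have nz: "1+a-b \<noteq> 0" "B \<noteq> 0" "1+a-d \<noteq> 0" "D \<noteq> 0" "2+a+of_nat M \<noteq> 0" "K \<noteq> 0"
    using b d k unfolding Suc rb rd rk by auto
  have "(\<Sum>n<Suc N. of_nat n * (a + of_nat n) * dougall_term a b d N n)
      = (\<Sum>m<Suc M. of_nat (Suc m) * (a + of_nat (Suc m)) * dougall_term a b d (Suc M) (Suc m))"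
    unfolding Suc by (subst sum.lessThan_Suc_shift) simp
  also have "\<dots> = c * (\<Sum>m<Suc M. dougall_term (a+2) (b+1) (d+1) M m)"
    unfolding sum_distrib_left c_def
    using b d k pochhammer_neq_0_mono unfolding Suc
    by (intro sum.cong refl dougall_term_shift a) fastforce+
  also have "\<dots> = c * (A3 * P / (B * D))"
  proof -
    have "pochhammer (1+(a+2)-(b+1)) M = B" "pochhammer (1+(a+2)-(d+1)) M = D"
      "pochhammer (1+(a+2)+of_nat M) M = K" "pochhammer (1+(a+2)) M = A3"
      "pochhammer (1+(a+2)-(b+1)-(d+1)) M = P"
      unfolding A3_def B_def D_def K_def P_def by (simp_all add: algebra_simps)
    with dougall_sum[OF a(2), of "b+1" M "d+1"] nz show ?thesis
      by simp
  qed
  also have "\<dots> = - of_nat N * b * d * pochhammer (1+a) N * pochhammer (1+a-b-d) (N - 1)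
      / (pochhammer (1+a-b) N * pochhammer (1+a-d) N)"
    unfolding c_def Suc rb rd ra(1) P_def[symmetric] diff_Suc_1
    using nz ra(2) by (simp add: divide_simps) (simp add: algebra_simps)
  finally show ?thesis .
qed

lemma hypergeom_terminating:
  assumes "- of_nat N \<in> set as"
  shows "hypergeom as bs z = (\<Sum>n<Suc N.
    prod_list (map (\<lambda>a. pochhammer a n) as) / prod_list (map (\<lambda>b. pochhammer b n) bs) * z ^ n / fact n)"
  unfolding hypergeom_def
proof (rule suminf_finite)
  fix n assume "n \<notin> {..<Suc N}"
  then have "pochhammer (- of_nat N :: complex) n = 0"
    by (simp add: pochhammer_of_nat_eq_0_lemma)
  then have "prod_list (map (\<lambda>a. pochhammer a n) as) = 0"
    using assms by (force simp: prod_list_zero_iff)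
  then show "prod_list (map (\<lambda>a. pochhammer a n) as) / prod_list (map (\<lambda>b. pochhammer b n) bs) * z ^ n / fact n = 0"
    by simp
qed simp

lemma hypergeom_7F6_term_eq:
  fixes a b d f :: "'a::field_char_0"
  assumes a: "a \<noteq> 0" and f: "f \<noteq> 0" "a - f \<noteq> 0"
    and nz: "pochhammer (a/2) n \<noteq> 0" "pochhammer (1+a-b) n \<noteq> 0" "pochhammer f n \<noteq> 0"
      "pochhammer (1+a-d) n \<noteq> 0" "pochhammer (a-f) n \<noteq> 0" "pochhammer (1+a+of_nat N) n \<noteq> 0"
  shows "prod_list (map (\<lambda>x. pochhammer x n) [a, 1 + a/2, b, a-f+1, d, f+1, - of_nat N])
      / prod_list (map (\<lambda>x. pochhammer x n) [a/2, 1+a-b, f, 1+a-d, a-f, 1+a+of_nat N]) * 1 ^ n / fact n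
    = dougall_term a b d N n + of_nat n * (a + of_nat n) * dougall_term a b d N n / ((a - f) * f)"
proof -
  have s1: "pochhammer (1 + a/2) n = (a/2 + of_nat n) / (a/2) * pochhammer (a/2) n"
    using pochhammer_plus_1[of "a/2" n] a by (simp add: add.commute)
  have s2: "pochhammer (a-f+1) n = (a-f + of_nat n) / (a-f) * pochhammer (a-f) n"
    and s3: "pochhammer (f+1) n = (f + of_nat n) / f * pochhammer f n"
    using pochhammer_plus_1 f by blast+
  show ?thesis
    unfolding list.map prod_list.Cons prod_list.Nil s1 s2 s3 dougall_term_def well_poised_term_def
    using a f nz by (simp add: field_simps)
qed

lemma g_ratio_identity:
  fixes a b d f g :: "'a::field_char_0"
  assumes f: "f \<noteq> 0" "a - f \<noteq> 0" and den: "f*(a-f) - d*b \<noteq> 0"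
    and g: "g = f*(b+d-a)*(f-a) / (f*(a-f) - d*b)" and gN: "pochhammer g N \<noteq> 0"
  shows "pochhammer (1+a-b-d) N - of_nat N * b * d * pochhammer (1+a-b-d) (N - 1) / ((a-f)*f)
    = pochhammer (a-b-d) N * (pochhammer (g+1) N / pochhammer g N)"
proof (cases N)
  case 0
  then show ?thesis by simp
next
  case (Suc M)
  define P where "P = pochhammer (1+a-b-d) M"
  have g0: "g \<noteq> 0"
    using gN unfolding Suc pochhammer_rec by simp
  have "g * (f*(a-f) - d*b) = f*(b+d-a)*(f-a)"
    using den unfolding g by simp
  then have key: "g * (f*(a-f) - d*b) = f*(a-f)*(a-b-d)"
    by (simp add: algebra_simps)
  have ratio: "pochhammer (g+1) N / pochhammer g N = (g + of_nat N) / g"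
    using pochhammer_shift[of g N] gN g0 by (simp add: field_simps)
  have "pochhammer (a-b-d) N = (a-b-d) * P"
    unfolding P_def Suc pochhammer_rec by (simp add: algebra_simps)
  moreover have "pochhammer (1+a-b-d) N = P * (a-b-d + of_nat N)"
    unfolding P_def Suc pochhammer_Suc by (simp add: algebra_simps)
  moreover have "pochhammer (1+a-b-d) (N - 1) = P"
    unfolding P_def Suc by simp
  ultimately have "(pochhammer (1+a-b-d) N - of_nat N * b * d * pochhammer (1+a-b-d) (N - 1) / ((a-f)*f))
      * ((a-f)*f*g) = pochhammer (a-b-d) N * (pochhammer (g+1) N / pochhammer g N) * ((a-f)*f*g)"
    unfolding ratio using f g0 key by (simp add: field_simps) algebra
  moreover have "(a-f)*f*g \<noteq> 0"
    using f g0 by simp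
  ultimately show ?thesis
    by (metis mult_right_cancel)
qed

lemma hypergeom_7F6_eq:
  fixes a b d f :: complex
  assumes a: "a \<noteq> 0" "a + 2 \<noteq> 0" and f: "f \<noteq> 0" "a - f \<noteq> 0"
    and nz: "\<And>n. pochhammer (a/2) n \<noteq> 0" "\<And>n. pochhammer (1+a-b) n \<noteq> 0" "\<And>n. pochhammer f n \<noteq> 0"
      "\<And>n. pochhammer (1+a-d) n \<noteq> 0" "\<And>n. pochhammer (a-f) n \<noteq> 0" "\<And>n. pochhammer (1+a+of_nat N) n \<noteq> 0"
  shows "hypergeom [a, 1 + a/2, b, a-f+1, d, f+1, - of_nat N] [a/2, 1+a-b, f, 1+a-d, a-f, 1+a+of_nat N] 1
    = pochhammer (1+a) N / (pochhammer (1+a-b) N * pochhammer (1+a-d) N)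
      * (pochhammer (1+a-b-d) N - of_nat N * b * d * pochhammer (1+a-b-d) (N - 1) / ((a-f)*f))"
proof -
  have terminating: "- of_nat N \<in> set [a, 1 + a/2, b, a-f+1, d, f+1, - of_nat N]"
    by simp
  have "hypergeom [a, 1 + a/2, b, a-f+1, d, f+1, - of_nat N] [a/2, 1+a-b, f, 1+a-d, a-f, 1+a+of_nat N] 1
      = (\<Sum>n<Suc N. dougall_term a b d N n + of_nat n * (a + of_nat n) * dougall_term a b d N n / ((a - f) * f))"
    unfolding hypergeom_terminating[OF terminating] by (intro sum.cong refl hypergeom_7F6_term_eq a f nz)
  also have "\<dots> = (\<Sum>n<Suc N. dougall_term a b d N n)
        + (\<Sum>n<Suc N. of_nat n * (a + of_nat n) * dougall_term a b d N n) / ((a - f) * f)"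
    by (simp only: sum.distrib sum_divide_distrib)
  also have "\<dots> = pochhammer (1+a) N / (pochhammer (1+a-b) N * pochhammer (1+a-d) N)
      * (pochhammer (1+a-b-d) N - of_nat N * b * d * pochhammer (1+a-b-d) (N - 1) / ((a-f)*f))"
    unfolding dougall_sum[OF a(1) nz(2,4,6)] dougall_weighted_sum[OF a nz(2,4,6)]
    by (simp add: divide_simps algebra_simps)
  finally show ?thesis .
qed

theorem mainTheorem1:
  fixes a b d f :: complex and N :: nat
  assumes lower: "\<forall>x\<in>{a/2, 1+a-b, f, 1+a-d, a-f, 1+a+of_nat N}. x \<notin> \<int>\<^sub>\<le>\<^sub>0"
    and den: "f*(a-f) - d*b \<noteq> 0"
    and gN: "pochhammer (f*(b+d-a)*(f-a) / (f*(a-f) - d*b)) N \<noteq> 0"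
  shows "hypergeom [a, 1 + a/2, b, a-f+1, d, f+1, - of_nat N]
                   [a/2, 1+a-b, f, 1+a-d, a-f, 1+a+of_nat N] 1 =
    (let g = f*(b+d-a)*(f-a) / (f*(a-f) - d*b) in
      pochhammer (1+a) N * pochhammer (a-b-d) N / (pochhammer (1+a-b) N * pochhammer (1+a-d) N)
      * (pochhammer (g+1) N / pochhammer g N))"
proof -
  have l: "a/2 \<notin> \<int>\<^sub>\<le>\<^sub>0" "1+a-b \<notin> \<int>\<^sub>\<le>\<^sub>0" "f \<notin> \<int>\<^sub>\<le>\<^sub>0" "1+a-d \<notin> \<int>\<^sub>\<le>\<^sub>0"
    "a-f \<notin> \<int>\<^sub>\<le>\<^sub>0" "1+a+of_nat N \<notin> \<int>\<^sub>\<le>\<^sub>0"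
    using lower by simp_all
  then have nz: "pochhammer (a/2) n \<noteq> 0" "pochhammer (1+a-b) n \<noteq> 0" "pochhammer f n \<noteq> 0"
    "pochhammer (1+a-d) n \<noteq> 0" "pochhammer (a-f) n \<noteq> 0" "pochhammer (1+a+of_nat N) n \<noteq> 0" for n
    by (simp_all add: pochhammer_neq_0_if_notin_nonpos_Ints)
  have "a/2 + of_nat 1 \<noteq> 0"
    using l(1) plus_of_nat_eq_0_imp by blast
  then have a: "a \<noteq> 0" "a + 2 \<noteq> 0" and f: "f \<noteq> 0" "a - f \<noteq> 0"
    using l by (auto simp: field_simps)
  define g where "g = f*(b+d-a)*(f-a) / (f*(a-f) - d*b)"
  show ?thesis
    unfolding hypergeom_7F6_eq[OF a f nz] Let_def g_def[symmetric]
    using g_ratio_identity[OF f den g_def] gN by (simp add: g_def)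
qed

end
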